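(* Let $R$ be a semiprime ring, $I$ an ideal of $R$, and $c\in I$ an element that is regular in $I$ (i.e. for $s\in I$, $sc=0$ implies $s=0$ and $cs=0$ implies $s=0$). Let $M=\mathrm{ann}_R(I)$. Then (1) $\mathrm{l.ann}_R(c)=\mathrm{r.ann}_R(c)=M$, and (2) $\eta(c)$ is regular (neither a left nor a right zero divisor) in the factor ring $R/M$, where $\eta\colon R\to R/M$ is the canonical epimorphism.
   Context: For $A\subseteq R$: $\mathrm{l.ann}_R(A)=\{r\in R\mid rA=0\}$, $\mathrm{r.ann}_R(A)=\{r\in R\mid Ar=0\}$, $\mathrm{ann}_R(A)=\{r\in R\mid rA=Ar=0\}$. *)

theory Defs
  imports Main
begin

text \<open>Rings are associative, not necessarily unital: Isabelle's type class ring.\<close>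

definition is_ideal :: "'a::ring set \<Rightarrow> bool" where
  "is_ideal I \<longleftrightarrow> 0 \<in> I \<and> (\<forall>x\<in>I. \<forall>y\<in>I. x + y \<in> I) \<and> (\<forall>x\<in>I. - x \<in> I)
     \<and> (\<forall>r x. x \<in> I \<longrightarrow> r * x \<in> I \<and> x * r \<in> I)"

text \<open>Semiprime: no nonzero ideal with zero square (equivalently no nonzero nilpotent ideal).
  For an ideal I, I^2 = 0 iff all products of two elements of I vanish.\<close>
definition semiprime :: "('a::ring) itself \<Rightarrow> bool" where
  "semiprime _ \<longleftrightarrow> (\<forall>I::'a set. is_ideal I \<and> (\<forall>x\<in>I. \<forall>y\<in>I. x * y = 0) \<longrightarrow> I = {0})"

definition l_ann :: "'a::ring set \<Rightarrow> 'a set" where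
  "l_ann A = {r. \<forall>a\<in>A. r * a = 0}"

definition r_ann :: "'a::ring set \<Rightarrow> 'a set" where
  "r_ann A = {r. \<forall>a\<in>A. a * r = 0}"

definition ann :: "'a::ring set \<Rightarrow> 'a set" where
  "ann A = {r. \<forall>a\<in>A. r * a = 0 \<and> a * r = 0}"

text \<open>Factor ring R/M: elements are the cosets x + M; canonical epimorphism eta.\<close>
definition eta :: "'a::ring set \<Rightarrow> 'a \<Rightarrow> 'a set" where
  "eta M x = {x + m | m. m \<in> M}"

definition quot_carrier :: "'a::ring set \<Rightarrow> 'a set set" where
  "quot_carrier M = range (eta M)"

text \<open>Product of cosets X, Y (for an ideal M this is the coset of xy).\<close>
definition quot_mult :: "'a::ring set \<Rightarrow> 'a set \<Rightarrow> 'a set \<Rightarrow> 'a set" where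
  "quot_mult M X Y = {x * y + m | x y m. x \<in> X \<and> y \<in> Y \<and> m \<in> M}"

definition quot_regular :: "'a::ring set \<Rightarrow> 'a set \<Rightarrow> bool" where
  "quot_regular M A \<longleftrightarrow>
     (\<forall>X\<in>quot_carrier M. quot_mult M A X = eta M 0 \<longrightarrow> X = eta M 0) \<and>
     (\<forall>X\<in>quot_carrier M. quot_mult M X A = eta M 0 \<longrightarrow> X = eta M 0)"

end

theory Submission
  imports Defs
begin

text \<open>Semiprimeness makes one-sided annihilators of an ideal I two-sided: I \<inter> l_ann I is an
  ideal of square zero, hence 0, and if x I = 0 then I x lies in it. For the regular element c,
  y c = 0 gives (I y) c = 0, hence I y = 0 and y \<in> ann I; symmetrically for c y = 0. Modulo
  M = ann I, c y \<in> M gives c (y I) = 0, so y I = 0 by regularity of c in I; in particular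
  y c = 0 and y \<in> M.\<close>

lemma is_ideal_Int:
  assumes "is_ideal I" and "is_ideal J"
  shows "is_ideal (I \<inter> J)"
  using assms unfolding is_ideal_def by blast

lemma is_ideal_r_ann:
  assumes "is_ideal I"
  shows "is_ideal (r_ann I)"
  using assms unfolding is_ideal_def r_ann_def
  by (auto simp: distrib_left mult.assoc[symmetric])

lemma is_ideal_l_ann:
  assumes "is_ideal I"
  shows "is_ideal (l_ann I)"
  using assms unfolding is_ideal_def l_ann_def
  by (auto simp: distrib_right mult.assoc)

lemma ann_eq_l_ann_Int_r_ann: "ann A = l_ann A \<inter> r_ann A"
  unfolding ann_def l_ann_def r_ann_def by blast

lemma is_ideal_ann:
  assumes "is_ideal I"
  shows "is_ideal (ann I)"
  unfolding ann_eq_l_ann_Int_r_ann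
  using assms is_ideal_Int is_ideal_l_ann is_ideal_r_ann by blast

lemma semiprime_ideal_Int_r_ann:
  assumes "semiprime TYPE('a)" and "is_ideal (I :: 'a::ring set)"
  shows "I \<inter> r_ann I = {0}"
proof -
  have "is_ideal (I \<inter> r_ann I)"
    using assms(2) is_ideal_Int is_ideal_r_ann by blast
  moreover have "\<forall>x\<in>I \<inter> r_ann I. \<forall>y\<in>I \<inter> r_ann I. x * y = 0"
    unfolding r_ann_def by blast
  ultimately show ?thesis
    using assms(1) unfolding semiprime_def by blast
qed

lemma semiprime_ideal_Int_l_ann:
  assumes "semiprime TYPE('a)" and "is_ideal (I :: 'a::ring set)"
  shows "I \<inter> l_ann I = {0}"
proof -
  have "is_ideal (I \<inter> l_ann I)"
    using assms(2) is_ideal_Int is_ideal_l_ann by blast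
  moreover have "\<forall>x\<in>I \<inter> l_ann I. \<forall>y\<in>I \<inter> l_ann I. x * y = 0"
    unfolding l_ann_def by blast
  ultimately show ?thesis
    using assms(1) unfolding semiprime_def by blast
qed

lemma semiprime_l_ann_ideal_eq_ann:
  assumes "semiprime TYPE('a)" and "is_ideal (I :: 'a::ring set)"
  shows "l_ann I = ann I"
proof
  show "l_ann I \<subseteq> ann I"
  proof
    fix x assume x: "x \<in> l_ann I"
    have "s * x = 0" if s: "s \<in> I" for s
    proof -
      have "s * x \<in> I"
        using assms(2) s unfolding is_ideal_def by blast
      moreover have "s * x \<in> l_ann I"
        using x unfolding l_ann_def by (simp add: mult.assoc)
      ultimately show ?thesis
        using semiprime_ideal_Int_l_ann[OF assms] by blast
    qed
    then show "x \<in> ann I"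
      using x unfolding l_ann_def ann_def by blast
  qed
qed (auto simp: ann_def l_ann_def)

lemma semiprime_r_ann_ideal_eq_ann:
  assumes "semiprime TYPE('a)" and "is_ideal (I :: 'a::ring set)"
  shows "r_ann I = ann I"
proof
  show "r_ann I \<subseteq> ann I"
  proof
    fix x assume x: "x \<in> r_ann I"
    have "x * s = 0" if s: "s \<in> I" for s
    proof -
      have "x * s \<in> I"
        using assms(2) s unfolding is_ideal_def by blast
      moreover have "x * s \<in> r_ann I"
        using x unfolding r_ann_def by (simp add: mult.assoc[symmetric])
      ultimately show ?thesis
        using semiprime_ideal_Int_r_ann[OF assms] by blast
    qed
    then show "x \<in> ann I"
      using x unfolding r_ann_def ann_def by blast
  qed
qed (auto simp: ann_def r_ann_def)

lemma semiprime_l_ann_regular_eq_ann: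
  assumes "semiprime TYPE('a)" and "is_ideal (I :: 'a::ring set)" and "c \<in> I"
    and regular: "\<forall>s\<in>I. s * c = 0 \<longrightarrow> s = 0"
  shows "l_ann {c} = ann I"
proof
  show "l_ann {c} \<subseteq> ann I"
  proof
    fix x assume "x \<in> l_ann {c}"
    then have "(s * x) * c = 0" for s
      unfolding l_ann_def by (simp add: mult.assoc)
    moreover have "s * x \<in> I" if "s \<in> I" for s
      using assms(2) that unfolding is_ideal_def by blast
    ultimately have "x \<in> r_ann I"
      using regular unfolding r_ann_def by blast
    then show "x \<in> ann I"
      using semiprime_r_ann_ideal_eq_ann[OF assms(1,2)] by blast
  qed
  show "ann I \<subseteq> l_ann {c}"
    using \<open>c \<in> I\<close> unfolding ann_def l_ann_def by blast
qed

lemma semiprime_r_ann_regular_eq_ann: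
  assumes "semiprime TYPE('a)" and "is_ideal (I :: 'a::ring set)" and "c \<in> I"
    and regular: "\<forall>s\<in>I. c * s = 0 \<longrightarrow> s = 0"
  shows "r_ann {c} = ann I"
proof
  show "r_ann {c} \<subseteq> ann I"
  proof
    fix x assume "x \<in> r_ann {c}"
    then have "c * (x * s) = 0" for s
      unfolding r_ann_def by (simp add: mult.assoc[symmetric])
    moreover have "x * s \<in> I" if "s \<in> I" for s
      using assms(2) that unfolding is_ideal_def by blast
    ultimately have "x \<in> l_ann I"
      using regular unfolding l_ann_def by blast
    then show "x \<in> ann I"
      using semiprime_l_ann_ideal_eq_ann[OF assms(1,2)] by blast
  qed
  show "ann I \<subseteq> r_ann {c}"
    using \<open>c \<in> I\<close> unfolding ann_def r_ann_def by blast
qed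

lemma self_in_eta:
  assumes "is_ideal M"
  shows "x \<in> eta M x"
  using assms unfolding eta_def is_ideal_def
  by (metis (mono_tags, lifting) add_0_right mem_Collect_eq)

lemma eta_eq_eta_0_iff:
  assumes "is_ideal M"
  shows "eta M x = eta M 0 \<longleftrightarrow> x \<in> M"
proof
  assume "eta M x = eta M 0"
  then show "x \<in> M"
    using self_in_eta[OF assms, of x] unfolding eta_def by simp
next
  assume x: "x \<in> M"
  have "eta M x \<subseteq> M"
    using assms x unfolding is_ideal_def eta_def by blast
  moreover have "M \<subseteq> eta M x"
  proof
    fix m assume "m \<in> M"
    then have "m - x \<in> M"
      using assms x unfolding is_ideal_def by (metis diff_conv_add_uminus)
    then show "m \<in> eta M x"
      unfolding eta_def by force
  qed
  ultimately show "eta M x = eta M 0"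
    unfolding eta_def by simp
qed

lemma quot_mult_eta:
  assumes "is_ideal M"
  shows "quot_mult M (eta M x) (eta M y) = eta M (x * y)"
proof
  show "quot_mult M (eta M x) (eta M y) \<subseteq> eta M (x * y)"
  proof
    fix z assume "z \<in> quot_mult M (eta M x) (eta M y)"
    then obtain m m' m'' where "m \<in> M" "m' \<in> M" "m'' \<in> M"
      and z: "z = (x + m) * (y + m') + m''"
      unfolding quot_mult_def eta_def by blast
    then have "x * m' + m * y + m * m' + m'' \<in> M"
      using assms unfolding is_ideal_def by meson
    moreover have "z = x * y + (x * m' + m * y + m * m' + m'')"
      unfolding z by (simp add: algebra_simps)
    ultimately show "z \<in> eta M (x * y)"
      unfolding eta_def by blast
  qed
  show "eta M (x * y) \<subseteq> quot_mult M (eta M x) (eta M y)"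
    using self_in_eta[OF assms, of x] self_in_eta[OF assms, of y]
    unfolding eta_def quot_mult_def by blast
qed

lemma quot_regular_eta_iff:
  assumes "is_ideal M"
  shows "quot_regular M (eta M c) \<longleftrightarrow>
    (\<forall>y. c * y \<in> M \<longrightarrow> y \<in> M) \<and> (\<forall>y. y * c \<in> M \<longrightarrow> y \<in> M)"
  unfolding quot_regular_def quot_carrier_def
  by (auto simp: quot_mult_eta eta_eq_eta_0_iff assms)
lemma regular_left_mult_in_ann:
  assumes "semiprime TYPE('a)" and "is_ideal (I :: 'a::ring set)" and "c \<in> I"
    and "\<forall>s\<in>I. s * c = 0 \<longrightarrow> s = 0" and "\<forall>s\<in>I. c * s = 0 \<longrightarrow> s = 0"
    and cy: "c * y \<in> ann I"
  shows "y \<in> ann I"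
proof -
  have "y * s = 0" if "s \<in> I" for s
  proof -
    have "c * (y * s) = 0"
      using cy that unfolding ann_def by (simp add: mult.assoc[symmetric])
    moreover have "y * s \<in> I"
      using assms(2) that unfolding is_ideal_def by blast
    ultimately show ?thesis
      using assms(5) by blast
  qed
  then have "y \<in> l_ann {c}"
    using \<open>c \<in> I\<close> unfolding l_ann_def by blast
  then show ?thesis
    using semiprime_l_ann_regular_eq_ann[OF assms(1-4)] by blast
qed

lemma regular_right_mult_in_ann:
  assumes "semiprime TYPE('a)" and "is_ideal (I :: 'a::ring set)" and "c \<in> I"
    and "\<forall>s\<in>I. s * c = 0 \<longrightarrow> s = 0" and "\<forall>s\<in>I. c * s = 0 \<longrightarrow> s = 0"
    and yc: "y * c \<in> ann I"
  shows "y \<in> ann I"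
proof -
  have "s * y = 0" if "s \<in> I" for s
  proof -
    have "(s * y) * c = 0"
      using yc that unfolding ann_def by (simp add: mult.assoc)
    moreover have "s * y \<in> I"
      using assms(2) that unfolding is_ideal_def by blast
    ultimately show ?thesis
      using assms(4) by blast
  qed
  then have "y \<in> r_ann {c}"
    using \<open>c \<in> I\<close> unfolding r_ann_def by blast
  then show ?thesis
    using semiprime_r_ann_regular_eq_ann[OF assms(1-3,5)] by blast
qed

theorem lemma1:
  fixes I :: "'a::ring set" and c :: 'a and M :: "'a set"
  assumes "semiprime TYPE('a)"
    and "is_ideal I"
    and "c \<in> I"
    and "\<forall>s\<in>I. s * c = 0 \<longrightarrow> s = 0"
    and "\<forall>s\<in>I. c * s = 0 \<longrightarrow> s = 0"
    and "M = ann I"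
  shows "l_ann {c} = M \<and> r_ann {c} = M \<and> quot_regular M (eta M c)"
proof -
  have "l_ann {c} = M"
    using semiprime_l_ann_regular_eq_ann[OF assms(1-4)] assms(6) by simp
  moreover have "r_ann {c} = M"
    using semiprime_r_ann_regular_eq_ann[OF assms(1-3,5)] assms(6) by simp
  moreover have "quot_regular M (eta M c)"
    unfolding assms(6) quot_regular_eta_iff[OF is_ideal_ann[OF assms(2)]]
    using regular_left_mult_in_ann[OF assms(1-5)] regular_right_mult_in_ann[OF assms(1-5)]
    by blast
  ultimately show ?thesis
    by blast
qed

end
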